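(* Let $(X,\rho)$ be a metric space, $f:X\to X$ continuous, $x\in X$, $\ell\in\mathbb N$, $n\ge2$ an integer and $\varepsilon>0$. Then \[ \mathrm{RR}_\ell(x,n,\varepsilon)=\frac{n}{n-1}\Big[\ell\,C_\ell(x,n,\varepsilon)-(\ell-1)C_{\ell+1}(x,n,\varepsilon)\Big]-\frac1{n-1}+\delta^{\mathrm{RR}}_\ell, \qquad |\delta^{\mathrm{RR}}_\ell|\le\frac{2\ell(\ell-1)}{n}. \]
   Context: Bowen metric $\rho_\ell(y,z)=\max_{0\le i<\ell}\rho(f^iy,f^iz)$; correlation sum $C_\ell(x,n,\varepsilon)=n^{-2}\#\{(i,j):0\le i,j<n,\ \rho_\ell(f^ix,f^jx)\le\varepsilon\}$. Recurrence plot $R(x,n,\varepsilon)$: $n\times n$ matrix ($0\le i,j<n$) with entry $1$ iff $\rho(f^ix,f^jx)\le\varepsilon$. A line of length $\ell$: triple $(i,j,\ell)$ with $0\le i,j\le n-\ell$, $i\ne j$, entries $(i+k,j+k)=1$ for $0\le k<\ell$, entry $(i-1,j-1)=0$ if $\min\{i,j\}>0$, entry $(i+\ell,j+\ell)=0$ if $\max\{i,j\}<n-\ell$. $N_l$ = number of lines of length exactly $l$ (boundary lines included), $\lambda_l=N_l/(n^2-n)$, recurrence rate $\mathrm{RR}_\ell(x,n,\varepsilon)=\sum_{l\ge\ell}l\lambda_l$. *)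

theory Defs
  imports "HOL-Analysis.Analysis"
begin

text \<open>Bowen metric rho_l(y,z) = max over 0 <= i < l of dist (f^i y) (f^i z) (meaningful for l >= 1).\<close>
definition bowen :: "('a::metric_space \<Rightarrow> 'a) \<Rightarrow> nat \<Rightarrow> 'a \<Rightarrow> 'a \<Rightarrow> real" where
  "bowen f l y z = Max ((\<lambda>i. dist ((f ^^ i) y) ((f ^^ i) z)) ` {0..<l})"

definition corr_sum :: "('a::metric_space \<Rightarrow> 'a) \<Rightarrow> nat \<Rightarrow> 'a \<Rightarrow> nat \<Rightarrow> real \<Rightarrow> real" where
  "corr_sum f l x n eps =
     real (card {(i, j). i < n \<and> j < n \<and> bowen f l ((f ^^ i) x) ((f ^^ j) x) \<le> eps}) / (real n)^2"

definition rp_entry :: "('a::metric_space \<Rightarrow> 'a) \<Rightarrow> 'a \<Rightarrow> real \<Rightarrow> nat \<Rightarrow> nat \<Rightarrow> bool" where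
  "rp_entry f x eps i j \<longleftrightarrow> dist ((f ^^ i) x) ((f ^^ j) x) \<le> eps"

definition is_line :: "('a::metric_space \<Rightarrow> 'a) \<Rightarrow> 'a \<Rightarrow> nat \<Rightarrow> real \<Rightarrow> nat \<Rightarrow> nat \<Rightarrow> nat \<Rightarrow> bool" where
  "is_line f x n eps i j l \<longleftrightarrow>
     i + l \<le> n \<and> j + l \<le> n \<and> i \<noteq> j \<and>
     (\<forall>k<l. rp_entry f x eps (i + k) (j + k)) \<and>
     (min i j > 0 \<longrightarrow> \<not> rp_entry f x eps (i - 1) (j - 1)) \<and>
     (max i j < n - l \<longrightarrow> \<not> rp_entry f x eps (i + l) (j + l))"

definition num_lines :: "('a::metric_space \<Rightarrow> 'a) \<Rightarrow> 'a \<Rightarrow> nat \<Rightarrow> real \<Rightarrow> nat \<Rightarrow> nat" where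
  "num_lines f x n eps l = card {(i, j). i < n \<and> j < n \<and> is_line f x n eps i j l}"

text \<open>RR_l(x,n,eps) = sum over l' >= l of l' * N_l' / (n^2 - n); lines have length at most n.\<close>
definition rec_rate :: "('a::metric_space \<Rightarrow> 'a) \<Rightarrow> nat \<Rightarrow> 'a \<Rightarrow> nat \<Rightarrow> real \<Rightarrow> real" where
  "rec_rate f l x n eps =
     (\<Sum>l'\<in>{l..n}. real l' * (real (num_lines f x n eps l') / ((real n)^2 - real n)))"

end

theory Submission
  imports Defs
begin

text \<open>Call a pair \<open>(i, j)\<close> with \<open>i \<noteq> j\<close> an inner run of length \<open>L\<close> if the \<open>L\<close> diagonal
  entries starting at \<open>(i, j)\<close> are all recurrences and stay inside the plot, and let \<open>q L\<close> be
  their number. A line of length \<open>L\<close> is an inner run that can be extended neither backwards nor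
  forwards, so inclusion--exclusion gives \<open>N L = q L - 2 q (L + 1) + q (L + 2)\<close>, and summation by
  parts turns \<open>\<Sum>L\<ge>l. L N L\<close> into \<open>l q l - (l - 1) q (l + 1)\<close>. On the other hand a pair is
  \<open>\<epsilon>\<close>-close in the Bowen metric \<open>\<rho>_l\<close> iff its run of length \<open>l\<close> consists of recurrences, so
  \<open>n\<^sup>2 C_l\<close> counts the \<open>n\<close> diagonal pairs, the \<open>q l\<close> inner runs and the runs that leave the
  plot; the latter have a coordinate among the last \<open>l - 1\<close> indices, which yields the error
  term.\<close>

definition diag_run :: "(nat \<Rightarrow> nat \<Rightarrow> bool) \<Rightarrow> nat \<Rightarrow> nat \<Rightarrow> nat \<Rightarrow> bool" where
  "diag_run R L i j \<longleftrightarrow> (\<forall>k<L. R (i + k) (j + k))"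

definition inner_runs :: "(nat \<Rightarrow> nat \<Rightarrow> bool) \<Rightarrow> nat \<Rightarrow> nat \<Rightarrow> (nat \<times> nat) set" where
  "inner_runs R n L = {(i, j). i \<noteq> j \<and> i + L \<le> n \<and> j + L \<le> n \<and> diag_run R L i j}"

definition boundary_runs :: "(nat \<Rightarrow> nat \<Rightarrow> bool) \<Rightarrow> nat \<Rightarrow> nat \<Rightarrow> (nat \<times> nat) set" where
  "boundary_runs R n L =
     {(i, j). i < n \<and> j < n \<and> i \<noteq> j \<and> (n < i + L \<or> n < j + L) \<and> diag_run R L i j}"

lemma diag_run_Suc_left: "diag_run R (Suc L) i j \<longleftrightarrow> R i j \<and> diag_run R L (Suc i) (Suc j)"
  unfolding diag_run_def by (simp add: All_less_Suc2)

lemma diag_run_Suc_right: "diag_run R (Suc L) i j \<longleftrightarrow> diag_run R L i j \<and> R (i + L) (j + L)"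
  unfolding diag_run_def by (auto simp: All_less_Suc)

lemma diag_run_mono: "L \<le> M \<Longrightarrow> diag_run R M i j \<Longrightarrow> diag_run R L i j"
  unfolding diag_run_def by auto

lemma finite_inner_runs: "finite (inner_runs R n L)"
  by (rule finite_subset[of _ "{..n} \<times> {..n}"]) (auto simp: inner_runs_def)

lemma inner_runs_empty: "n < L \<Longrightarrow> inner_runs R n L = {}"
  by (auto simp: inner_runs_def)

lemma inj_map_prod_Suc: "inj (map_prod Suc Suc)"
  using map_prod_inj_on[of Suc UNIV Suc UNIV] by simp

lemma shifted_inner_runs_subset:
  "map_prod Suc Suc ` inner_runs R n (Suc L) \<union> inner_runs R n (Suc L) \<subseteq> inner_runs R n L"
  using diag_run_mono[of L "Suc L" R]
  by (auto simp: inner_runs_def diag_run_Suc_left)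

lemma shifted_inner_runs_Int:
  "map_prod Suc Suc ` inner_runs R n (Suc L) \<inter> inner_runs R n (Suc L)
     = map_prod Suc Suc ` inner_runs R n (Suc (Suc L))"
proof (intro set_eqI iffI)
  fix p assume "p \<in> map_prod Suc Suc ` inner_runs R n (Suc L) \<inter> inner_runs R n (Suc L)"
  then obtain i j where "p = (Suc i, Suc j)" "(Suc i, Suc j) \<in> inner_runs R n (Suc L)"
    "(i, j) \<in> inner_runs R n (Suc L)"
    by auto
  then show "p \<in> map_prod Suc Suc ` inner_runs R n (Suc (Suc L))"
    by (auto simp: inner_runs_def diag_run_Suc_left[of R "Suc L"] diag_run_Suc_left[of R L])
next
  fix p assume "p \<in> map_prod Suc Suc ` inner_runs R n (Suc (Suc L))"
  then obtain i j where p: "p = (Suc i, Suc j)" and run: "(i, j) \<in> inner_runs R n (Suc (Suc L))"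
    by auto
  have "(i, j) \<in> inner_runs R n (Suc L)"
    using run by (auto simp: inner_runs_def diag_run_Suc_right[of R "Suc L"])
  moreover have "(Suc i, Suc j) \<in> inner_runs R n (Suc L)"
    using run by (auto simp: inner_runs_def diag_run_Suc_left[of R "Suc L"])
  ultimately show "p \<in> map_prod Suc Suc ` inner_runs R n (Suc L) \<inter> inner_runs R n (Suc L)"
    using p by (auto intro: rev_image_eqI)
qed

lemma card_nonextendable_inner_runs:
  "real (card (inner_runs R n L - (map_prod Suc Suc ` inner_runs R n (Suc L) \<union> inner_runs R n (Suc L))))
     = real (card (inner_runs R n L)) - 2 * real (card (inner_runs R n (Suc L)))
       + real (card (inner_runs R n (Suc (Suc L))))"
proof -
  let ?Q = "inner_runs R n" and ?S = "map_prod Suc Suc ` inner_runs R n (Suc L)"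
  have sub: "?S \<union> ?Q (Suc L) \<subseteq> ?Q L"
    by (rule shifted_inner_runs_subset)
  then have fin: "finite (?S \<union> ?Q (Suc L))"
    using finite_inner_runs by (rule finite_subset)
  have "card (?Q L - (?S \<union> ?Q (Suc L))) = card (?Q L) - card (?S \<union> ?Q (Suc L))"
    using fin sub by (rule card_Diff_subset)
  moreover have "card (?S \<union> ?Q (Suc L)) \<le> card (?Q L)"
    using sub finite_inner_runs by (rule card_mono[rotated])
  moreover have "card ?S + card (?Q (Suc L)) = card (?S \<union> ?Q (Suc L)) + card (?S \<inter> ?Q (Suc L))"
    using fin by (intro card_Un_Int) auto
  moreover have "card ?S = card (?Q (Suc L))"
    by (rule card_image[OF inj_on_subset[OF inj_map_prod_Suc]]) simp
  moreover have "card (?S \<inter> ?Q (Suc L)) = card (?Q (Suc (Suc L)))"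
    unfolding shifted_inner_runs_Int by (rule card_image[OF inj_on_subset[OF inj_map_prod_Suc]]) simp
  ultimately show ?thesis
    by linarith
qed

text \<open>\<open>map_prod Suc Suc ` Q (Suc L)\<close> are the runs that extend one step backwards, \<open>Q (Suc L)\<close>
  those that extend one step forwards.\<close>
lemma lines_eq_nonextendable_inner_runs:
  fixes f :: "'a::metric_space \<Rightarrow> 'a" and x :: 'a and n :: nat and eps :: real
  assumes "L \<ge> 1"
  defines "Q \<equiv> inner_runs (rp_entry f x eps) n"
  shows "{(i, j). i < n \<and> j < n \<and> is_line f x n eps i j L}
           = Q L - (map_prod Suc Suc ` Q (Suc L) \<union> Q (Suc L))"
proof (intro set_eqI iffI)
  fix p assume "p \<in> {(i, j). i < n \<and> j < n \<and> is_line f x n eps i j L}"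
  then obtain i j where p: "p = (i, j)" and line: "is_line f x n eps i j L"
    by auto
  have "(i, j) \<notin> map_prod Suc Suc ` Q (Suc L)"
    using line by (auto simp: Q_def inner_runs_def is_line_def diag_run_Suc_left)
  then show "p \<in> Q L - (map_prod Suc Suc ` Q (Suc L) \<union> Q (Suc L))"
    using line p by (auto simp: Q_def inner_runs_def is_line_def diag_run_def All_less_Suc)
next
  fix p assume "p \<in> Q L - (map_prod Suc Suc ` Q (Suc L) \<union> Q (Suc L))"
  moreover obtain i j where p: "p = (i, j)"
    by fastforce
  ultimately have run: "(i, j) \<in> Q L" and not_backward: "(i, j) \<notin> map_prod Suc Suc ` Q (Suc L)"
    and not_forward: "(i, j) \<notin> Q (Suc L)"
    by auto
  have "\<not> rp_entry f x eps (i - 1) (j - 1)" if "min i j > 0"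
  proof
    assume "rp_entry f x eps (i - 1) (j - 1)"
    then have "(i - 1, j - 1) \<in> Q (Suc L)"
      using run that by (auto simp: Q_def inner_runs_def diag_run_Suc_left)
    then have "(i, j) \<in> map_prod Suc Suc ` Q (Suc L)"
      using that by (auto intro!: image_eqI[of _ _ "(i - 1, j - 1)"])
    then show False
      using not_backward by contradiction
  qed
  moreover have "\<not> rp_entry f x eps (i + L) (j + L)" if "max i j < n - L"
    using run not_forward that by (auto simp: Q_def inner_runs_def diag_run_Suc_right)
  ultimately show "p \<in> {(i, j). i < n \<and> j < n \<and> is_line f x n eps i j L}"
    using run p assms(1) by (auto simp: Q_def inner_runs_def is_line_def diag_run_def)
qed

lemma num_lines_eq_second_difference:
  fixes f :: "'a::metric_space \<Rightarrow> 'a" and x :: 'a and n :: nat and eps :: real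
  assumes "L \<ge> 1"
  defines "q \<equiv> \<lambda>L. real (card (inner_runs (rp_entry f x eps) n L))"
  shows "real (num_lines f x n eps L) = q L - 2 * q (Suc L) + q (Suc (Suc L))"
  unfolding num_lines_def lines_eq_nonextendable_inner_runs[OF assms(1)] q_def
  by (rule card_nonextendable_inner_runs)

lemma sum_weighted_second_difference:
  fixes q :: "nat \<Rightarrow> real"
  assumes "\<And>L. n < L \<Longrightarrow> q L = 0"
  shows "(\<Sum>L\<in>{l..n}. real L * (q L - 2 * q (Suc L) + q (Suc (Suc L))))
           = real l * q l - (real l - 1) * q (Suc l)"
proof (cases "l \<le> n + 1")
  case True
  then show ?thesis
  proof (induction l rule: inc_induct)
    case base
    then show ?case using assms by simp
  next
    case (step m)
    have "{m..n} = insert m {Suc m..n}"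
      using step by auto
    then show ?case
      using step.IH by (simp add: algebra_simps)
  qed
next
  case False
  then show ?thesis using assms by simp
qed

lemma rec_rate_eq_inner_runs:
  fixes f :: "'a::metric_space \<Rightarrow> 'a" and x :: 'a and n :: nat and eps :: real
  assumes "l \<ge> 1"
  defines "q \<equiv> \<lambda>L. real (card (inner_runs (rp_entry f x eps) n L))"
  shows "rec_rate f l x n eps = (real l * q l - (real l - 1) * q (Suc l)) / (real n * (real n - 1))"
proof -
  have "(\<Sum>L\<in>{l..n}. real L * real (num_lines f x n eps L))
          = (\<Sum>L\<in>{l..n}. real L * (q L - 2 * q (Suc L) + q (Suc (Suc L))))"
    using assms(1) by (intro sum.cong) (auto simp: num_lines_eq_second_difference q_def)
  also have "\<dots> = real l * q l - (real l - 1) * q (Suc l)"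
    by (rule sum_weighted_second_difference) (simp add: q_def inner_runs_empty)
  finally show ?thesis
    unfolding rec_rate_def times_divide_eq_right sum_divide_distrib[symmetric]
    by (simp add: power2_eq_square algebra_simps)
qed

lemma bowen_le_iff_diag_run:
  assumes "l \<ge> 1"
  shows "bowen f l ((f ^^ i) x) ((f ^^ j) x) \<le> eps \<longleftrightarrow> diag_run (rp_entry f x eps) l i j"
proof -
  have "(f ^^ k) ((f ^^ i) x) = (f ^^ (i + k)) x" for k i
    by (simp only: add.commute[of i k] funpow_add o_apply)
  moreover have "{0..<l} \<noteq> {}"
    using assms by auto
  ultimately show ?thesis
    by (auto simp: bowen_def diag_run_def rp_entry_def Max_le_iff)
qed

lemma card_diag_run_pairs:
  assumes refl: "\<And>i. R i i" and "L \<ge> 1"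
  shows "card {(i, j). i < n \<and> j < n \<and> diag_run R L i j}
           = n + card (inner_runs R n L) + card (boundary_runs R n L)"
proof -
  define D where "D = (\<lambda>i. (i, i)) ` {..<n}"
  have "{(i, j). i < n \<and> j < n \<and> diag_run R L i j} = D \<union> inner_runs R n L \<union> boundary_runs R n L"
    using assms by (auto simp: D_def inner_runs_def boundary_runs_def diag_run_def)
  moreover have "card D = n"
    unfolding D_def by (subst card_image) (auto simp: inj_on_def)
  moreover have "finite (boundary_runs R n L)"
    by (rule finite_subset[of _ "{..<n} \<times> {..<n}"]) (auto simp: boundary_runs_def)
  moreover have "D \<inter> inner_runs R n L = {}" "(D \<union> inner_runs R n L) \<inter> boundary_runs R n L = {}"
    by (auto simp: D_def inner_runs_def boundary_runs_def)
  ultimately show ?thesis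
    by (simp add: D_def card_Un_disjoint finite_inner_runs)
qed

lemma corr_sum_eq_runs:
  fixes f :: "'a::metric_space \<Rightarrow> 'a" and x :: 'a and n :: nat and eps :: real
  assumes "l \<ge> 1" "eps \<ge> 0"
  defines "R \<equiv> rp_entry f x eps"
  shows "corr_sum f l x n eps
           = (real n + real (card (inner_runs R n l)) + real (card (boundary_runs R n l))) / (real n)\<^sup>2"
proof -
  have "R i i" for i
    using assms(2) by (simp add: R_def rp_entry_def)
  then show ?thesis
    using card_diag_run_pairs[of R l n] assms(1)
    by (simp add: corr_sum_def bowen_le_iff_diag_run R_def)
qed

text \<open>A boundary pair has a coordinate among the last \<open>L - 1\<close> indices; the other coordinate
  is any of the \<open>n - 1\<close> indices distinct from it.\<close>
lemma card_boundary_pairs_le: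
  "card {(i, j). i < n \<and> j < n \<and> i \<noteq> j \<and> (n < i + L \<or> n < j + L)} \<le> 2 * (L - 1) * (n - 1)"
proof -
  define T where "T = Sigma {i. i < n \<and> n < i + L} (\<lambda>i. {..<n} - {i})"
  have "card {i. i < n \<and> n < i + L} \<le> card {n + 1 - L..<n}"
    by (rule card_mono) auto
  then have "card {i. i < n \<and> n < i + L} \<le> L - 1"
    by simp
  moreover have "card T = card {i. i < n \<and> n < i + L} * (n - 1)"
    unfolding T_def by (simp add: card_SigmaI)
  ultimately have card_T: "card T \<le> (L - 1) * (n - 1)"
    by (simp add: mult_le_mono1)
  have fin_T: "finite T"
    by (simp add: T_def)
  have "{(i, j). i < n \<and> j < n \<and> i \<noteq> j \<and> (n < i + L \<or> n < j + L)} \<subseteq> T \<union> prod.swap ` T"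
    unfolding T_def by force
  then have "card {(i, j). i < n \<and> j < n \<and> i \<noteq> j \<and> (n < i + L \<or> n < j + L)}
               \<le> card (T \<union> prod.swap ` T)"
    using fin_T by (intro card_mono) auto
  also have "\<dots> \<le> card T + card (prod.swap ` T)"
    by (rule card_Un_le)
  finally show ?thesis
    using card_T card_image_le[OF fin_T, of prod.swap] unfolding mult.assoc by linarith
qed

lemma card_boundary_runs_le:
  assumes "L \<ge> 1" "n \<ge> 1"
  shows "real (card (boundary_runs R n L)) \<le> 2 * (real L - 1) * (real n - 1)"
proof -
  have "card (boundary_runs R n L)
          \<le> card {(i, j). i < n \<and> j < n \<and> i \<noteq> j \<and> (n < i + L \<or> n < j + L)}"
    by (rule card_mono) (auto simp: boundary_runs_def intro: finite_subset[of _ "{..<n} \<times> {..<n}"])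
  also have "\<dots> \<le> 2 * (L - 1) * (n - 1)"
    by (rule card_boundary_pairs_le)
  finally have "real (card (boundary_runs R n L)) \<le> real (2 * (L - 1) * (n - 1))"
    by (simp only: of_nat_le_iff)
  then show ?thesis
    using assms by (simp add: of_nat_diff)
qed

lemma recurrence_identity:
  fixes N l q1 q2 b1 b2 :: real
  assumes "N \<noteq> 0" "N \<noteq> 1"
  shows "(l * q1 - (l - 1) * q2) / (N * (N - 1))
           = N / (N - 1) * (l * ((N + q1 + b1) / N\<^sup>2) - (l - 1) * ((N + q2 + b2) / N\<^sup>2))
             - 1 / (N - 1) + - (l * b1 - (l - 1) * b2) / (N * (N - 1))"
proof -
  have "N / (N - 1) * (l * ((N + q1 + b1) / N\<^sup>2) - (l - 1) * ((N + q2 + b2) / N\<^sup>2))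
          = (l * (N + q1 + b1) - (l - 1) * (N + q2 + b2)) / (N * (N - 1))"
    using assms by (simp add: field_simps power2_eq_square)
  moreover have "1 / (N - 1) = N / (N * (N - 1))"
    using assms by simp
  ultimately show ?thesis
    by (simp add: diff_divide_distrib[symmetric] add_divide_distrib[symmetric] algebra_simps)
qed

lemma recurrence_error_bound:
  fixes N l b1 b2 :: real
  assumes "l \<ge> 1" "N > 1" "0 \<le> b1" "b1 \<le> 2 * (l - 1) * (N - 1)" "0 \<le> b2" "b2 \<le> 2 * l * (N - 1)"
  shows "\<bar>- (l * b1 - (l - 1) * b2) / (N * (N - 1))\<bar> \<le> 2 * l * (l - 1) / N"
proof -
  have "l * b1 \<le> l * (2 * (l - 1) * (N - 1))" and "(l - 1) * b2 \<le> (l - 1) * (2 * l * (N - 1))"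
    using assms by (auto intro: mult_left_mono)
  moreover have "0 \<le> l * b1" and "0 \<le> (l - 1) * b2"
    using assms by auto
  ultimately have "\<bar>l * b1 - (l - 1) * b2\<bar> \<le> 2 * l * (l - 1) * (N - 1)"
    by (simp add: abs_le_iff algebra_simps)
  then have "\<bar>l * b1 - (l - 1) * b2\<bar> / (N * (N - 1)) \<le> 2 * l * (l - 1) * (N - 1) / (N * (N - 1))"
    using assms(2) by (intro divide_right_mono) auto
  also have "\<dots> = 2 * l * (l - 1) / N"
    using assms(2) by (simp add: field_simps)
  finally show ?thesis
    using assms(2) by (simp add: abs_divide abs_minus_commute)
qed

theorem mainTheorem7:
  fixes f :: "'a::metric_space \<Rightarrow> 'a" and x :: 'a and l n :: nat and eps :: real
  assumes "continuous_on UNIV f" and "l \<ge> 1" and "n \<ge> 2" and "eps > 0"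
  shows "\<exists>\<delta>. rec_rate f l x n eps =
             real n / (real n - 1) * (real l * corr_sum f l x n eps
                                      - (real l - 1) * corr_sum f (l + 1) x n eps)
             - 1 / (real n - 1) + \<delta>
           \<and> \<bar>\<delta>\<bar> \<le> 2 * real l * (real l - 1) / real n"
proof -
  let ?R = "rp_entry f x eps"
  define q where "q L = real (card (inner_runs ?R n L))" for L
  define b where "b L = real (card (boundary_runs ?R n L))" for L
  have rr: "rec_rate f l x n eps = (real l * q l - (real l - 1) * q (l + 1)) / (real n * (real n - 1))"
    unfolding q_def Suc_eq_plus1[symmetric] using assms(2) by (rule rec_rate_eq_inner_runs)
  have corr: "corr_sum f L x n eps = (real n + q L + b L) / (real n)\<^sup>2" if "L \<ge> 1" for L
    unfolding q_def b_def using that assms(4) by (simp add: corr_sum_eq_runs)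
  have "\<bar>- (real l * b l - (real l - 1) * b (l + 1)) / (real n * (real n - 1))\<bar>
          \<le> 2 * real l * (real l - 1) / real n"
    unfolding b_def using assms(2,3) card_boundary_runs_le[of l n ?R] card_boundary_runs_le[of "l + 1" n ?R]
    by (intro recurrence_error_bound) auto
  moreover have "real n \<noteq> 0" "real n \<noteq> 1"
    using assms(3) by auto
  ultimately show ?thesis
    unfolding rr corr[OF assms(2)] corr[OF le_add2] by (blast intro: recurrence_identity)
qed

end
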